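(* Let $M\ge 1$ and let $\mathcal{F}$ be the (finite) set of phase-connection vectors $\boldsymbol{x}=[x_1^1,x_1^2,x_1^3,\dots,x_M^1,x_M^2,x_M^3]^T\in\{0,1\}^{3M}$ satisfying $\sum_{i=1}^3 x_m^i=1$ for every $m$. For $\boldsymbol{x}\in\mathcal{F}$ let $X=X(\boldsymbol{x})$ be the $M\times 3M$ block-diagonal matrix $X=\mathrm{diag}([x_1^1\ x_1^2\ x_1^3],\dots,[x_M^1\ x_M^2\ x_M^3])$. Fix real $3M\times 3M$ matrices $\hat K,\hat L$. Let $(\tilde{\boldsymbol v}^{\mathrm{ref}}(t),\tilde{\boldsymbol p}(t),\tilde{\boldsymbol q}(t))_{t\ge1}$ be random vectors with $\tilde{\boldsymbol v}^{\mathrm{ref}}(t)\in\mathbb R^{3M}$, $\tilde{\boldsymbol p}(t),\tilde{\boldsymbol q}(t)\in\mathbb R^M$, and for $\boldsymbol x\in\mathcal F$ define $$\tilde{\boldsymbol v}(t,\boldsymbol x)=X\tilde{\boldsymbol v}^{\mathrm{ref}}(t)+X\hat K X^T\tilde{\boldsymbol p}(t)+X\hat L X^T\tilde{\boldsymbol q}(t).$$ Let $\boldsymbol x^*\in\mathcal F$ (the correct phase connection) and suppose the observations are $\tilde{\boldsymbol v}(t)=\tilde{\boldsymbol v}(t,\boldsymbol x^* )+\boldsymbol n(t)$, where $\boldsymbol n(t)\sim\mathcal N(\mathbf 0_M,\Sigma_n)$ with $\Sigma_n$ positive definite. For $T\ge1$ and $\boldsymbol x\in\mathcal F$ let $$f_T(\boldsymbol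 x)=\frac1T\sum_{t=1}^T[\tilde{\boldsymbol v}(t)-\tilde{\boldsymbol v}(t,\boldsymbol x)]^T\Sigma_n^{-1}[\tilde{\boldsymbol v}(t)-\tilde{\boldsymbol v}(t,\boldsymbol x)].$$ Assume: (1) the $\boldsymbol n(t_k)$, $t_k\in\mathbb Z^+$, are i.i.d. and $\boldsymbol n(t_k)$ is independent of $\tilde{\boldsymbol v}^{\mathrm{ref}}(t_l),\tilde{\boldsymbol p}(t_l),\tilde{\boldsymbol q}(t_l)$ for all $t_k,t_l\in\mathbb Z^+$ (jointly, the noise sequence is independent of the input sequence); (2) the triples $(\tilde{\boldsymbol v}^{\mathrm{ref}}(t),\tilde{\boldsymbol p}(t),\tilde{\boldsymbol q}(t))$ are independent across distinct times $t$; and (3) for each $\boldsymbol x\in\mathcal F$, $\sup_t \mathbb E\|\tilde{\boldsymbol v}(t,\boldsymbol x^* )-\tilde{\boldsymbol v}(t,\boldsymbol x)\|^2<\infty$. Then, almost surely, $\lim_{T\to\infty} f_T(\boldsymbol x^* )$ exists and for every $\boldsymbol x\in\mathcal F$, $$\liminf_{T\to\infty} f_T(\boldsymbol x)\ \ge\ \lim_{T\to\infty} f_T(\boldsymbol x^* );$$ i.e., as $T\to\infty$, $\boldsymbol x^*$ is a global minimizer of $f_T$ over $\mathcal F$ (equivalently a maximizer of the Gaussian likelihood of the observations).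
   Context: Setting: phase identification for $M$ loads in a distribution network. $x_m^i=1$ indicates that load $m$ has the $i$-th of its three possible phase connections. $\tilde{\boldsymbol v}(t)$ denotes time-differenced voltage-magnitude measurements of the loads, $\tilde{\boldsymbol v}^{\mathrm{ref}}(t)$ time-differenced reference (substation) voltages, and $\tilde{\boldsymbol p}(t),\tilde{\boldsymbol q}(t)$ time-differenced real and reactive power measurements of the loads; $\hat K,\hat L$ are fixed sensitivity matrices derived from the linearized power flow model of the feeder. $f_T$ is, up to additive constants and positive scaling, the negative log-likelihood of the observations $\{\tilde{\boldsymbol v}(t)\}_{t=1}^T$ given the inputs, under the Gaussian noise model. *)

theory Defs
  imports "HOL-Probability.Probability"
begin

text \<open>Index conventions: loads are indexed by a finite type 'm (so M = CARD('m) \<ge> 1),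
  phases by the three-element type 3; a vector in R^{3M} is indexed by 'm \<times> 3,
  the entry at (m,i) being x_m^i.\<close>

definition phase_set :: "(real^('m::finite \<times> 3)) set" where
  "phase_set = {x. (\<forall>j. x $ j = 0 \<or> x $ j = 1) \<and> (\<forall>m. (\<Sum>i\<in>(UNIV::3 set). x $ (m, i)) = 1)}"

definition phase_mat :: "real^('m::finite \<times> 3) \<Rightarrow> real^('m \<times> 3)^'m" where
  "phase_mat x = (\<chi> m. \<chi> j. if fst j = m then x $ j else 0)"

definition model_volt ::
  "real^('m::finite \<times> 3)^('m \<times> 3) \<Rightarrow> real^('m \<times> 3)^('m \<times> 3) \<Rightarrow>
   real^('m \<times> 3) \<Rightarrow> real^'m \<Rightarrow> real^'m \<Rightarrow> real^('m \<times> 3) \<Rightarrow> real^'m" where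
  "model_volt K L vref p q x =
     phase_mat x *v vref + (phase_mat x ** K ** transpose (phase_mat x)) *v p
       + (phase_mat x ** L ** transpose (phase_mat x)) *v q"

definition pos_def_mat :: "real^'n::finite^'n \<Rightarrow> bool" where
  "pos_def_mat S \<longleftrightarrow> transpose S = S \<and> (\<forall>x. x \<noteq> 0 \<longrightarrow> x \<bullet> (S *v x) > 0)"

definition mvn_density :: "real^'n::finite^'n \<Rightarrow> real^'n \<Rightarrow> real" where
  "mvn_density S z = exp (- (z \<bullet> (matrix_inv S *v z)) / 2) / sqrt ((2 * pi) ^ CARD('n) * det S)"

definition cost_fun ::
  "real^('m::finite \<times> 3)^('m \<times> 3) \<Rightarrow> real^('m \<times> 3)^('m \<times> 3) \<Rightarrow> real^'m^'m \<Rightarrow>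
   (nat \<Rightarrow> 'w \<Rightarrow> real^('m \<times> 3)) \<Rightarrow> (nat \<Rightarrow> 'w \<Rightarrow> real^'m) \<Rightarrow> (nat \<Rightarrow> 'w \<Rightarrow> real^'m) \<Rightarrow>
   (nat \<Rightarrow> 'w \<Rightarrow> real^'m) \<Rightarrow> real^('m \<times> 3) \<Rightarrow> nat \<Rightarrow> real^('m \<times> 3) \<Rightarrow> 'w \<Rightarrow> real" where
  "cost_fun K L S Vr Pp Qq N xstar T x \<omega> =
     (1 / real T) * (\<Sum>t = 1..T.
        let d = (model_volt K L (Vr t \<omega>) (Pp t \<omega>) (Qq t \<omega>) xstar + N t \<omega>)
                - model_volt K L (Vr t \<omega>) (Pp t \<omega>) (Qq t \<omega>) x
        in d \<bullet> (matrix_inv S *v d))"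

end

theory Submission
  imports Defs "HOL-Library.Discrete_Functions"
begin

(* Write d_t = g_t + n_t, where g_t = v(t,x^star) - v(t,x) is the voltage gap and n_t the noise.
   Expanding the quadratic form gives
     f_T(x) = f_T(x^star) + (1/T) sum_t w_t . n_t + (1/T) sum_t g_t^T Sigma^-1 g_t,
   with w_t = (Sigma^-T + Sigma^-1) g_t, and the last sum is nonnegative.  Both
   f_T(x^star) - E[n^T Sigma^-1 n] and the cross average are averages of square-integrable, pairwise
   orthogonal variables: the noise is independent across time, and w_s, w_t are functions of the
   inputs, which are independent of the zero-mean noise.  The L^2 strong law (second moments
   summable along T = k^2, then interpolation between consecutive squares) makes both averages
   converge almost surely, to E[n^T Sigma^-1 n] and 0; F is finite, so the null sets can be
   combined. *)

lemma abs_mult_le_sum_squares: "\<bar>(a::real) * b\<bar> \<le> a\<^sup>2 + b\<^sup>2"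
proof -
  have "0 \<le> (\<bar>a\<bar> - \<bar>b\<bar>)\<^sup>2" by simp
  then have "2 * \<bar>a * b\<bar> \<le> a\<^sup>2 + b\<^sup>2" by (simp add: power2_eq_square algebra_simps abs_mult)
  then show ?thesis by simp
qed

lemma integrable_mult_square_integrable:
  fixes f g :: "'a \<Rightarrow> real"
  assumes "f \<in> borel_measurable M" "g \<in> borel_measurable M"
    and "integrable M (\<lambda>\<omega>. (f \<omega>)\<^sup>2)" "integrable M (\<lambda>\<omega>. (g \<omega>)\<^sup>2)"
  shows "integrable M (\<lambda>\<omega>. f \<omega> * g \<omega>)"
  by (rule Bochner_Integration.integrable_bound[OF Bochner_Integration.integrable_add[OF assms(3,4)]])
     (use assms(1,2) abs_mult_le_sum_squares in auto)

lemma second_moment_sum_orthogonal: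
  fixes Y :: "nat \<Rightarrow> 'a \<Rightarrow> real"
  assumes "finite A"
    and meas: "\<And>t. t \<in> A \<Longrightarrow> Y t \<in> borel_measurable M"
    and sq: "\<And>t. t \<in> A \<Longrightarrow> integrable M (\<lambda>\<omega>. (Y t \<omega>)\<^sup>2)"
    and orth: "\<And>s t. s \<in> A \<Longrightarrow> t \<in> A \<Longrightarrow> s \<noteq> t \<Longrightarrow> (\<integral>\<omega>. Y s \<omega> * Y t \<omega> \<partial>M) = 0"
    and bnd: "\<And>t. t \<in> A \<Longrightarrow> (\<integral>\<omega>. (Y t \<omega>)\<^sup>2 \<partial>M) \<le> C"
  shows "integrable M (\<lambda>\<omega>. (\<Sum>t\<in>A. Y t \<omega>)\<^sup>2)"
    and "(\<integral>\<omega>. (\<Sum>t\<in>A. Y t \<omega>)\<^sup>2 \<partial>M) \<le> real (card A) * C"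
proof -
  have prod: "integrable M (\<lambda>\<omega>. Y s \<omega> * Y t \<omega>)" if "s \<in> A" "t \<in> A" for s t
    using that by (intro integrable_mult_square_integrable meas sq)
  have expand: "(\<Sum>t\<in>A. Y t \<omega>)\<^sup>2 = (\<Sum>s\<in>A. \<Sum>t\<in>A. Y s \<omega> * Y t \<omega>)" for \<omega>
    by (simp add: power2_eq_square sum_product)
  show "integrable M (\<lambda>\<omega>. (\<Sum>t\<in>A. Y t \<omega>)\<^sup>2)"
    unfolding expand using prod by auto
  have "(\<integral>\<omega>. (\<Sum>t\<in>A. Y t \<omega>)\<^sup>2 \<partial>M) = (\<Sum>s\<in>A. \<Sum>t\<in>A. \<integral>\<omega>. Y s \<omega> * Y t \<omega> \<partial>M)"
    unfolding expand using prod by (simp add: Bochner_Integration.integral_sum)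
  also have "\<dots> = (\<Sum>s\<in>A. \<integral>\<omega>. (Y s \<omega>)\<^sup>2 \<partial>M)"
    using \<open>finite A\<close> orth
    by (intro sum.cong refl) (simp add: sum.remove[of A] power2_eq_square)
  also have "\<dots> \<le> real (card A) * C"
    using sum_mono[of A _ "\<lambda>_. C"] bnd by simp
  finally show "(\<integral>\<omega>. (\<Sum>t\<in>A. Y t \<omega>)\<^sup>2 \<partial>M) \<le> real (card A) * C" .
qed

lemma second_moment_sum_abs:
  fixes Y :: "nat \<Rightarrow> 'a \<Rightarrow> real"
  assumes "finite A"
    and meas: "\<And>t. t \<in> A \<Longrightarrow> Y t \<in> borel_measurable M"
    and sq: "\<And>t. t \<in> A \<Longrightarrow> integrable M (\<lambda>\<omega>. (Y t \<omega>)\<^sup>2)"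
    and bnd: "\<And>t. t \<in> A \<Longrightarrow> (\<integral>\<omega>. (Y t \<omega>)\<^sup>2 \<partial>M) \<le> C"
  shows "integrable M (\<lambda>\<omega>. (\<Sum>t\<in>A. \<bar>Y t \<omega>\<bar>)\<^sup>2)"
    and "(\<integral>\<omega>. (\<Sum>t\<in>A. \<bar>Y t \<omega>\<bar>)\<^sup>2 \<partial>M) \<le> real (card A)^2 * C"
proof -
  have cauchy_schwarz: "(\<Sum>t\<in>A. \<bar>Y t \<omega>\<bar>)\<^sup>2 \<le> real (card A) * (\<Sum>t\<in>A. (Y t \<omega>)\<^sup>2)" for \<omega>
    using sum_squared_le_sum_of_squares[of "\<lambda>t. \<bar>Y t \<omega>\<bar>" A] by (simp add: mult.commute)
  have I: "integrable M (\<lambda>\<omega>. real (card A) * (\<Sum>t\<in>A. (Y t \<omega>)\<^sup>2))"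
    using sq by auto
  show I': "integrable M (\<lambda>\<omega>. (\<Sum>t\<in>A. \<bar>Y t \<omega>\<bar>)\<^sup>2)"
    by (rule Bochner_Integration.integrable_bound[OF I])
       (use meas cauchy_schwarz in \<open>auto intro!: AE_I2 order.trans[OF _ abs_ge_self]\<close>)
  have "(\<integral>\<omega>. (\<Sum>t\<in>A. \<bar>Y t \<omega>\<bar>)\<^sup>2 \<partial>M) \<le> (\<integral>\<omega>. real (card A) * (\<Sum>t\<in>A. (Y t \<omega>)\<^sup>2) \<partial>M)"
    by (rule integral_mono[OF I' I cauchy_schwarz])
  also have "\<dots> = real (card A) * (\<Sum>t\<in>A. \<integral>\<omega>. (Y t \<omega>)\<^sup>2 \<partial>M)"
    using sq by (simp add: Bochner_Integration.integral_sum)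
  also have "\<dots> \<le> real (card A) * (real (card A) * C)"
    using sum_mono[of A _ "\<lambda>_. C"] bnd by (simp add: mult_left_mono)
  finally show "(\<integral>\<omega>. (\<Sum>t\<in>A. \<bar>Y t \<omega>\<bar>)\<^sup>2 \<partial>M) \<le> real (card A)^2 * C"
    by (simp add: power2_eq_square mult_ac)
qed

lemma AE_tendsto_zero_summable_second_moments:
  fixes X :: "nat \<Rightarrow> 'a \<Rightarrow> real"
  assumes meas[measurable]: "\<And>k. X k \<in> borel_measurable M"
    and sq: "\<And>k. integrable M (\<lambda>\<omega>. (X k \<omega>)\<^sup>2)"
    and summ: "summable (\<lambda>k. \<integral>\<omega>. (X k \<omega>)\<^sup>2 \<partial>M)"
  shows "AE \<omega> in M. (\<lambda>k. X k \<omega>) \<longlonglongrightarrow> 0"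
proof -
  have "(\<integral>\<^sup>+\<omega>. (\<Sum>k. ennreal ((X k \<omega>)\<^sup>2)) \<partial>M) = (\<Sum>k. \<integral>\<^sup>+\<omega>. ennreal ((X k \<omega>)\<^sup>2) \<partial>M)"
    by (rule nn_integral_suminf) measurable
  also have "\<dots> = (\<Sum>k. ennreal (\<integral>\<omega>. (X k \<omega>)\<^sup>2 \<partial>M))"
    using sq by (simp add: nn_integral_eq_integral)
  also have "\<dots> \<noteq> \<infinity>"
  proof -
    have "0 \<le> (\<integral>\<omega>. (X k \<omega>)\<^sup>2 \<partial>M)" for k by simp
    then show ?thesis using ennreal_suminf_neq_top[OF summ] unfolding infinity_ennreal_def by blast
  qed
  finally have "AE \<omega> in M. (\<Sum>k. ennreal ((X k \<omega>)\<^sup>2)) \<noteq> \<infinity>"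
    by (intro nn_integral_PInf_AE) measurable
  then show ?thesis
  proof eventually_elim
    case (elim \<omega>)
    then have "(\<lambda>k. (X k \<omega>)\<^sup>2) \<longlonglongrightarrow> 0"
      by (intro summable_LIMSEQ_zero summable_suminf_not_top) auto
    then have "(\<lambda>k. sqrt ((X k \<omega>)\<^sup>2)) \<longlonglongrightarrow> 0"
      using tendsto_real_sqrt by fastforce
    then show ?case
      by (simp add: tendsto_rabs_zero_iff)
  qed
qed

lemma averages_tendsto_zero_along_squares:
  fixes y :: "nat \<Rightarrow> real"
  assumes S: "(\<lambda>k. (\<Sum>t=1..k\<^sup>2. y t) / (real k)\<^sup>2) \<longlonglongrightarrow> 0"
    and R: "(\<lambda>k. (\<Sum>t\<in>{k\<^sup>2<..(Suc k)\<^sup>2}. \<bar>y t\<bar>) / (real k)\<^sup>2) \<longlonglongrightarrow> 0"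
  shows "(\<lambda>T. (\<Sum>t=1..T. y t) / real T) \<longlonglongrightarrow> 0"
proof -
  define Z where "Z k = (\<bar>\<Sum>t=1..k\<^sup>2. y t\<bar> + (\<Sum>t\<in>{k\<^sup>2<..(Suc k)\<^sup>2}. \<bar>y t\<bar>)) / (real k)\<^sup>2" for k
  have "(\<lambda>k. \<bar>(\<Sum>t=1..k\<^sup>2. y t) / (real k)\<^sup>2\<bar> + (\<Sum>t\<in>{k\<^sup>2<..(Suc k)\<^sup>2}. \<bar>y t\<bar>) / (real k)\<^sup>2) \<longlonglongrightarrow> 0 + 0"
    by (intro tendsto_add tendsto_rabs_zero S R)
  then have "Z \<longlonglongrightarrow> 0"
    by (simp add: Z_def[abs_def] add_divide_distrib)
  moreover have "filterlim floor_sqrt at_top sequentially"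
    unfolding filterlim_at_top
    using eventually_ge_at_top by (blast intro: eventually_mono le_floor_sqrtI)
  ultimately have Z_sqrt: "(\<lambda>T. Z (floor_sqrt T)) \<longlonglongrightarrow> 0"
    by (rule filterlim_compose)
  have "norm ((\<Sum>t=1..T. y t) / real T) \<le> Z (floor_sqrt T)" if "T \<ge> 1" for T
  proof -
    define k where "k = floor_sqrt T"
    have k: "k\<^sup>2 \<le> T" "T < (Suc k)\<^sup>2" "1 \<le> k"
      using that Suc_floor_sqrt_power2_gt[of T] le_floor_sqrtI[of 1 T] by (auto simp: k_def)
    have "(\<Sum>t=1..T. y t) = (\<Sum>t=1..k\<^sup>2. y t) + (\<Sum>t\<in>{k\<^sup>2<..T}. y t)"
      using k(1) by (subst sum.union_disjoint[symmetric]) (auto intro!: sum.cong)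
    moreover have "\<bar>\<Sum>t\<in>{k\<^sup>2<..T}. y t\<bar> \<le> (\<Sum>t\<in>{k\<^sup>2<..(Suc k)\<^sup>2}. \<bar>y t\<bar>)"
      using k(2) by (intro order.trans[OF sum_abs] sum_mono2) auto
    ultimately have "\<bar>\<Sum>t=1..T. y t\<bar> \<le> \<bar>\<Sum>t=1..k\<^sup>2. y t\<bar> + (\<Sum>t\<in>{k\<^sup>2<..(Suc k)\<^sup>2}. \<bar>y t\<bar>)"
      by linarith
    moreover have "(real k)\<^sup>2 \<le> real T" "0 < (real k)\<^sup>2"
      using k by (simp_all flip: of_nat_power)
    ultimately show ?thesis
      unfolding Z_def k_def[symmetric] real_norm_def abs_divide
      by (intro frac_le) auto
  qed
  then show ?thesis
    by (intro Lim_null_comparison[OF _ Z_sqrt] eventually_mono[OF eventually_ge_at_top[of 1]])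
qed

lemma summable_le_inverse_square:
  fixes f :: "nat \<Rightarrow> real"
  assumes "\<And>k. 0 \<le> f k" and "\<And>k. k \<ge> 1 \<Longrightarrow> f k \<le> c * inverse (real k ^ 2)"
  shows "summable f"
  by (rule summable_comparison_test'[of "\<lambda>k. c * inverse (real k ^ 2)" 1])
     (use assms in \<open>auto intro: summable_mult inverse_power_summable\<close>)

lemma AE_sums_to_squares_tendsto_zero:
  fixes Y :: "nat \<Rightarrow> 'a \<Rightarrow> real"
  assumes meas: "\<And>t. t \<ge> 1 \<Longrightarrow> Y t \<in> borel_measurable M"
    and sq: "\<And>t. t \<ge> 1 \<Longrightarrow> integrable M (\<lambda>\<omega>. (Y t \<omega>)\<^sup>2)"
    and orth: "\<And>s t. s \<ge> 1 \<Longrightarrow> t \<ge> 1 \<Longrightarrow> s \<noteq> t \<Longrightarrow> (\<integral>\<omega>. Y s \<omega> * Y t \<omega> \<partial>M) = 0"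
    and bnd: "\<And>t. t \<ge> 1 \<Longrightarrow> (\<integral>\<omega>. (Y t \<omega>)\<^sup>2 \<partial>M) \<le> C"
  shows "AE \<omega> in M. (\<lambda>k. (\<Sum>t=1..k\<^sup>2. Y t \<omega>) / (real k)\<^sup>2) \<longlonglongrightarrow> 0"
proof (rule AE_tendsto_zero_summable_second_moments)
  let ?S = "\<lambda>k \<omega>. (\<Sum>t=1..k\<^sup>2. Y t \<omega>) / (real k)\<^sup>2"
  note moments = second_moment_sum_orthogonal[where A = "{1..k\<^sup>2}" and M = M and C = C for k]
  show "?S k \<in> borel_measurable M" for k
    using meas by (intro borel_measurable_divide borel_measurable_sum) auto
  show "integrable M (\<lambda>\<omega>. (?S k \<omega>)\<^sup>2)" for k
    unfolding power_divide by (intro integrable_divide moments(1)) (use meas sq orth bnd in auto)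
  show "summable (\<lambda>k. \<integral>\<omega>. (?S k \<omega>)\<^sup>2 \<partial>M)"
  proof (rule summable_le_inverse_square)
    fix k :: nat assume "k \<ge> 1"
    have "(\<integral>\<omega>. (?S k \<omega>)\<^sup>2 \<partial>M) = (\<integral>\<omega>. (\<Sum>t=1..k\<^sup>2. Y t \<omega>)\<^sup>2 \<partial>M) / (real k)\<^sup>2 / (real k)\<^sup>2"
      by (simp add: power_divide power2_eq_square[of "(real k)\<^sup>2"])
    also have "\<dots> \<le> (real k)\<^sup>2 * C / (real k)\<^sup>2 / (real k)\<^sup>2"
      using moments(2) meas sq orth bnd by (intro divide_right_mono) auto
    finally show "(\<integral>\<omega>. (?S k \<omega>)\<^sup>2 \<partial>M) \<le> C * inverse (real k ^ 2)"
      using \<open>k \<ge> 1\<close> by (simp add: field_simps)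
  qed simp
qed

lemma AE_sums_between_squares_tendsto_zero:
  fixes Y :: "nat \<Rightarrow> 'a \<Rightarrow> real"
  assumes meas: "\<And>t. t \<ge> 1 \<Longrightarrow> Y t \<in> borel_measurable M"
    and sq: "\<And>t. t \<ge> 1 \<Longrightarrow> integrable M (\<lambda>\<omega>. (Y t \<omega>)\<^sup>2)"
    and bnd: "\<And>t. t \<ge> 1 \<Longrightarrow> (\<integral>\<omega>. (Y t \<omega>)\<^sup>2 \<partial>M) \<le> C"
  shows "AE \<omega> in M. (\<lambda>k. (\<Sum>t\<in>{k\<^sup>2<..(Suc k)\<^sup>2}. \<bar>Y t \<omega>\<bar>) / (real k)\<^sup>2) \<longlonglongrightarrow> 0"
proof (rule AE_tendsto_zero_summable_second_moments)
  let ?R = "\<lambda>k \<omega>. (\<Sum>t\<in>{k\<^sup>2<..(Suc k)\<^sup>2}. \<bar>Y t \<omega>\<bar>) / (real k)\<^sup>2"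
  note moments = second_moment_sum_abs[where A = "{k\<^sup>2<..(Suc k)\<^sup>2}" and M = M and C = C for k]
  have "0 \<le> (\<integral>\<omega>. (Y 1 \<omega>)\<^sup>2 \<partial>M)"
    by (rule integral_nonneg_AE) simp
  with bnd[of 1] have "0 \<le> C" by linarith
  show "?R k \<in> borel_measurable M" for k
    using meas by (intro borel_measurable_divide borel_measurable_sum borel_measurable_abs) auto
  show "integrable M (\<lambda>\<omega>. (?R k \<omega>)\<^sup>2)" for k
    unfolding power_divide by (intro integrable_divide moments(1)) (use meas sq bnd in auto)
  show "summable (\<lambda>k. \<integral>\<omega>. (?R k \<omega>)\<^sup>2 \<partial>M)"
  proof (rule summable_le_inverse_square)
    fix k :: nat assume "k \<ge> 1"
    have card: "card {k\<^sup>2<..(Suc k)\<^sup>2} = 2 * k + 1"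
      by (simp add: power2_eq_square)
    have "(\<integral>\<omega>. (?R k \<omega>)\<^sup>2 \<partial>M) = (\<integral>\<omega>. (\<Sum>t\<in>{k\<^sup>2<..(Suc k)\<^sup>2}. \<bar>Y t \<omega>\<bar>)\<^sup>2 \<partial>M) / (real k)\<^sup>2 / (real k)\<^sup>2"
      by (simp add: power_divide power2_eq_square[of "(real k)\<^sup>2"])
    also have "\<dots> \<le> (real (2 * k + 1))\<^sup>2 * C / (real k)\<^sup>2 / (real k)\<^sup>2"
      using moments(2)[of k, unfolded card] meas sq bnd by (intro divide_right_mono) auto
    also have "\<dots> \<le> (3 * real k)\<^sup>2 * C / (real k)\<^sup>2 / (real k)\<^sup>2"
      using \<open>k \<ge> 1\<close> \<open>0 \<le> C\<close> by (intro divide_right_mono mult_right_mono power_mono) auto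
    finally show "(\<integral>\<omega>. (?R k \<omega>)\<^sup>2 \<partial>M) \<le> 9 * C * inverse (real k ^ 2)"
      using \<open>k \<ge> 1\<close> by (simp add: field_simps power_mult_distrib)
  qed simp
qed

theorem strong_law_orthogonal:
  fixes Y :: "nat \<Rightarrow> 'a \<Rightarrow> real"
  assumes "\<And>t. t \<ge> 1 \<Longrightarrow> Y t \<in> borel_measurable M"
    and "\<And>t. t \<ge> 1 \<Longrightarrow> integrable M (\<lambda>\<omega>. (Y t \<omega>)\<^sup>2)"
    and "\<And>s t. s \<ge> 1 \<Longrightarrow> t \<ge> 1 \<Longrightarrow> s \<noteq> t \<Longrightarrow> (\<integral>\<omega>. Y s \<omega> * Y t \<omega> \<partial>M) = 0"
    and "\<And>t. t \<ge> 1 \<Longrightarrow> (\<integral>\<omega>. (Y t \<omega>)\<^sup>2 \<partial>M) \<le> C"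
  shows "AE \<omega> in M. (\<lambda>T. (\<Sum>t=1..T. Y t \<omega>) / real T) \<longlonglongrightarrow> 0"
proof -
  have "AE \<omega> in M. (\<lambda>k. (\<Sum>t=1..k\<^sup>2. Y t \<omega>) / (real k)\<^sup>2) \<longlonglongrightarrow> 0"
    using assms by (rule AE_sums_to_squares_tendsto_zero)
  moreover have "AE \<omega> in M. (\<lambda>k. (\<Sum>t\<in>{k\<^sup>2<..(Suc k)\<^sup>2}. \<bar>Y t \<omega>\<bar>) / (real k)\<^sup>2) \<longlonglongrightarrow> 0"
    using assms(1,2,4) by (rule AE_sums_between_squares_tendsto_zero)
  ultimately show ?thesis
    by eventually_elim (rule averages_tendsto_zero_along_squares)
qed

lemma pos_def_mat_invertible:
  fixes S :: "real^'n::finite^'n"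
  assumes "pos_def_mat S"
  shows "invertible S"
proof -
  have "S *v x = 0 \<Longrightarrow> x = 0" for x
    using assms unfolding pos_def_mat_def by (metis inner_zero_right less_irrefl)
  then show ?thesis
    using matrix_left_invertible_ker invertible_left_inverse by blast
qed

lemma matrix_inv_right:
  fixes S :: "'a::field^'n::finite^'n"
  assumes "invertible S"
  shows "S ** matrix_inv S = mat 1"
  using someI_ex[OF assms[unfolded invertible_def]] by (auto simp: matrix_inv_def)

lemma pos_def_mat_inv_form:
  fixes S :: "real^'n::finite^'n"
  assumes "pos_def_mat S"
  shows pos_def_mat_inv_form_nonneg: "0 \<le> x \<bullet> (matrix_inv S *v x)"
    and pos_def_mat_inv_form_pos: "x \<noteq> 0 \<Longrightarrow> 0 < x \<bullet> (matrix_inv S *v x)"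
proof -
  define w where "w = matrix_inv S *v x"
  have x: "x = S *v w"
    using matrix_inv_right[OF pos_def_mat_invertible[OF assms]]
    by (simp add: w_def matrix_vector_mul_assoc)
  then have form: "x \<bullet> (matrix_inv S *v x) = w \<bullet> (S *v w)"
    by (simp add: w_def inner_commute)
  show "0 \<le> x \<bullet> (matrix_inv S *v x)"
    using assms unfolding form pos_def_mat_def by (cases "w = 0") (auto intro: less_imp_le)
  show "0 < x \<bullet> (matrix_inv S *v x)" if "x \<noteq> 0"
  proof -
    have "w \<noteq> 0"
      using that x by auto
    then show ?thesis
      using assms unfolding form pos_def_mat_def by auto
  qed
qed

lemma quadratic_form_scaleR:
  fixes A :: "real^'n::finite^'n"
  shows "(c *\<^sub>R x) \<bullet> (A *v (c *\<^sub>R x)) = c\<^sup>2 * (x \<bullet> (A *v x))"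
  by (simp add: matrix_vector_mult_scaleR power2_eq_square)

lemma continuous_on_matrix_vector_mult [continuous_intros]:
  fixes A :: "real^'n::finite^'m::finite"
  shows "continuous_on s f \<Longrightarrow> continuous_on s (\<lambda>x. A *v f x)"
  by (rule continuous_on_compose2[OF matrix_vector_mult_linear_continuous_on[of UNIV A]]) auto

lemma borel_measurable_quadratic_form [measurable]:
  fixes A :: "real^'n::finite^'n"
  shows "(\<lambda>z. z \<bullet> (A *v z)) \<in> borel_measurable borel"
  by (intro borel_measurable_continuous_onI continuous_intros)

lemma quadratic_form_coercive:
  fixes A :: "real^'n::finite^'n"
  assumes pos: "\<And>x. x \<noteq> 0 \<Longrightarrow> 0 < x \<bullet> (A *v x)"
  obtains \<mu> where "\<mu> > 0" "\<And>x. \<mu> * (norm x)\<^sup>2 \<le> x \<bullet> (A *v x)"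
proof -
  have "continuous_on (sphere 0 1) (\<lambda>x. x \<bullet> (A *v x))"
    by (intro continuous_intros)
  then obtain u where u: "u \<in> sphere 0 1"
    and min: "\<And>y. y \<in> sphere 0 1 \<Longrightarrow> u \<bullet> (A *v u) \<le> y \<bullet> (A *v y)"
    using continuous_attains_inf[OF compact_sphere, of 0 1] by force
  have "u \<bullet> (A *v u) * (norm x)\<^sup>2 \<le> x \<bullet> (A *v x)" for x
  proof (cases "x = 0")
    case False
    define y where "y = (1 / norm x) *\<^sub>R x"
    have "y \<in> sphere 0 1" "x = norm x *\<^sub>R y"
      using False by (simp_all add: y_def)
    then show ?thesis
      using mult_right_mono[OF min, of y "(norm x)\<^sup>2"] quadratic_form_scaleR[of "norm x" y A]
      by (simp add: mult.commute)
  qed simp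
  moreover have "0 < u \<bullet> (A *v u)"
    using u by (intro pos) auto
  ultimately show ?thesis
    using that by blast
qed

lemma nn_integral_lborel_scaleR:
  fixes f :: "'a::euclidean_space \<Rightarrow> ennreal"
  assumes [measurable]: "f \<in> borel_measurable borel" and "c \<noteq> 0"
  shows "(\<integral>\<^sup>+x. f x \<partial>lborel) = ennreal (\<bar>c\<bar> ^ DIM('a)) * (\<integral>\<^sup>+x. f (c *\<^sub>R x) \<partial>lborel)"
  by (subst lborel_affine[OF \<open>c \<noteq> 0\<close>, of 0])
     (simp add: nn_integral_density nn_integral_distr nn_integral_cmult)

lemma lborel_integral_uminus:
  fixes f :: "'a::euclidean_space \<Rightarrow> real"
  assumes [measurable]: "f \<in> borel_measurable borel"
  shows "(\<integral>z. f z \<partial>lborel) = (\<integral>z. f (- z) \<partial>lborel)"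
proof -
  have "lborel = distr lborel borel (\<lambda>x::'a. - x)"
    using lborel_affine[of "-1" "0::'a"] by (simp add: density_1)
  then have "(\<integral>z. f z \<partial>lborel) = (\<integral>z. f z \<partial>distr lborel borel (\<lambda>x::'a. - x))"
    by (rule arg_cong)
  also have "\<dots> = (\<integral>z. f (- z) \<partial>lborel)"
    by (rule integral_distr) auto
  finally show ?thesis .
qed

lemma square_mult_exp_le:
  fixes q :: real
  assumes "0 \<le> q"
  shows "(1 + q)\<^sup>2 * exp (- q / 2) \<le> 64 * exp (- q / 4)"
proof -
  have "(1 + q / 8)\<^sup>2 \<le> (exp (q / 8))\<^sup>2"
    using assms exp_ge_add_one_self[of "q / 8"] by (intro power_mono) auto
  also have "\<dots> = exp (q / 4)"
    by (simp add: power2_eq_square flip: exp_add)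
  finally have "(1 + q)\<^sup>2 \<le> 64 * exp (q / 4)"
    using assms by (simp add: power2_eq_square algebra_simps)
  then have "(1 + q)\<^sup>2 * exp (- q / 2) \<le> 64 * exp (q / 4) * exp (- q / 2)"
    by (rule mult_right_mono) simp
  also have "\<dots> = 64 * exp (- q / 4)"
    by (simp flip: exp_add)
  finally show ?thesis .
qed

lemma borel_measurable_mvn_density [measurable]: "mvn_density S \<in> borel_measurable borel"
  unfolding mvn_density_def by measurable

(* The normalising constant is positive because the density has total mass 1;
   this avoids proving det S > 0. *)
lemma mvn_normalizer_pos:
  fixes S :: "real^'n::finite^'n"
  assumes "(\<integral>\<^sup>+z. ennreal (mvn_density S z) \<partial>lborel) = 1"
  shows "0 < sqrt ((2 * pi) ^ CARD('n) * det S)"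
proof (rule ccontr)
  assume "\<not> ?thesis"
  then have "ennreal (mvn_density S z) = 0" for z
    unfolding mvn_density_def ennreal_eq_0_iff by (intro divide_nonneg_nonpos) auto
  with assms show False
    by simp
qed

lemma mvn_density_nonneg:
  assumes "(\<integral>\<^sup>+z. ennreal (mvn_density S z) \<partial>lborel) = 1"
  shows "0 \<le> mvn_density S z"
  using mvn_normalizer_pos[OF assms] by (simp add: mvn_density_def)

lemma mvn_density_uminus: "mvn_density S (- z) = mvn_density S z"
  using quadratic_form_scaleR[of "-1" z "matrix_inv S"] by (simp add: mvn_density_def)

lemma integral_mvn_density_component: "(\<integral>z. mvn_density S z * z $ k \<partial>lborel) = 0"
proof -
  have "(\<integral>z. mvn_density S z * z $ k \<partial>lborel) = (\<integral>z. mvn_density S (- z) * (- z) $ k \<partial>lborel)"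
    by (rule lborel_integral_uminus) simp
  also have "\<dots> = - (\<integral>z. mvn_density S z * z $ k \<partial>lborel)"
    by (simp add: mvn_density_uminus)
  finally show ?thesis
    by simp
qed

(* The mass of exp (-q/4) is that of exp (-q/2), i.e. of the unnormalised density, after
   rescaling by sqrt 2. *)
lemma nn_integral_exp_quarter_form_finite:
  fixes S :: "real^'n::finite^'n"
  assumes tot: "(\<integral>\<^sup>+z. ennreal (mvn_density S z) \<partial>lborel) = 1"
  shows "(\<integral>\<^sup>+z. ennreal (exp (- (z \<bullet> (matrix_inv S *v z)) / 4)) \<partial>lborel) < \<infinity>"
proof -
  define q where "q z = z \<bullet> (matrix_inv S *v z)" for z :: "real^'n"
  define c where "c = sqrt ((2 * pi) ^ CARD('n) * det S)"
  have [measurable]: "q \<in> borel_measurable borel"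
    unfolding q_def by measurable
  have "0 < c"
    unfolding c_def by (rule mvn_normalizer_pos[OF tot])
  have density: "mvn_density S z = exp (- q z / 2) / c" for z
    unfolding mvn_density_def q_def c_def by simp
  have "(\<integral>\<^sup>+z. ennreal (exp (- q z / 2)) \<partial>lborel) = (\<integral>\<^sup>+z. ennreal c * ennreal (mvn_density S z) \<partial>lborel)"
    using \<open>0 < c\<close> by (intro nn_integral_cong) (simp add: density flip: ennreal_mult)
  also have "\<dots> = ennreal c"
    using tot by (simp add: nn_integral_cmult)
  finally have mass_half: "(\<integral>\<^sup>+z. ennreal (exp (- q z / 2)) \<partial>lborel) = ennreal c" .
  have "(\<integral>\<^sup>+z. ennreal (exp (- q z / 4)) \<partial>lborel)
      = ennreal (sqrt 2 ^ DIM(real^'n)) * (\<integral>\<^sup>+z. ennreal (exp (- q (sqrt 2 *\<^sub>R z) / 4)) \<partial>lborel)"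
    using nn_integral_lborel_scaleR[of "\<lambda>z. ennreal (exp (- q z / 4))" "sqrt 2"] by simp
  also have "\<dots> = ennreal (sqrt 2 ^ DIM(real^'n)) * ennreal c"
    using quadratic_form_scaleR[of "sqrt 2" _ "matrix_inv S"] mass_half by (simp add: q_def[symmetric])
  finally show ?thesis
    by (simp add: q_def ennreal_mult_less_top)
qed

lemma integrable_mvn_density_moment:
  fixes S :: "real^'n::finite^'n"
  assumes pd: "pos_def_mat S"
    and tot: "(\<integral>\<^sup>+z. ennreal (mvn_density S z) \<partial>lborel) = 1"
  shows "integrable lborel (\<lambda>z. (1 + z \<bullet> (matrix_inv S *v z))\<^sup>2 * mvn_density S z)"
proof -
  define q where "q z = z \<bullet> (matrix_inv S *v z)" for z :: "real^'n"
  define c where "c = sqrt ((2 * pi) ^ CARD('n) * det S)"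
  have [measurable]: "q \<in> borel_measurable borel"
    unfolding q_def by measurable
  have "0 < c"
    unfolding c_def by (rule mvn_normalizer_pos[OF tot])
  have density: "mvn_density S z = exp (- q z / 2) / c" for z
    unfolding mvn_density_def q_def c_def by simp
  have "(\<integral>\<^sup>+z. ennreal (norm ((1 + q z)\<^sup>2 * mvn_density S z)) \<partial>lborel)
      \<le> (\<integral>\<^sup>+z. ennreal (64 / c) * ennreal (exp (- q z / 4)) \<partial>lborel)"
  proof (intro nn_integral_mono)
    fix z
    have "norm ((1 + q z)\<^sup>2 * mvn_density S z) = (1 + q z)\<^sup>2 * exp (- q z / 2) / c"
      using \<open>0 < c\<close> by (simp add: density)
    also have "\<dots> \<le> 64 * exp (- q z / 4) / c"
      using \<open>0 < c\<close> square_mult_exp_le[OF pos_def_mat_inv_form_nonneg[OF pd]]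
      by (simp add: q_def divide_right_mono)
    finally show "ennreal (norm ((1 + q z)\<^sup>2 * mvn_density S z)) \<le> ennreal (64 / c) * ennreal (exp (- q z / 4))"
      using \<open>0 < c\<close> by (simp add: ennreal_leI flip: ennreal_mult)
  qed
  also have "\<dots> < \<infinity>"
    using nn_integral_exp_quarter_form_finite[OF tot]
    by (simp add: q_def nn_integral_cmult ennreal_mult_less_top)
  finally show ?thesis
    unfolding q_def[symmetric] by (intro integrableI_bounded) simp_all
qed

lemma integrable_mvn_density_mult:
  fixes S :: "real^'n::finite^'n"
  assumes pd: "pos_def_mat S"
    and tot: "(\<integral>\<^sup>+z. ennreal (mvn_density S z) \<partial>lborel) = 1"
    and [measurable]: "g \<in> borel_measurable borel"
    and bound: "\<And>z. \<bar>g z\<bar> \<le> C * (1 + z \<bullet> (matrix_inv S *v z))\<^sup>2"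
  shows "integrable lborel (\<lambda>z. mvn_density S z * g z)"
proof (rule Bochner_Integration.integrable_bound)
  show "integrable lborel (\<lambda>z. C * ((1 + z \<bullet> (matrix_inv S *v z))\<^sup>2 * mvn_density S z))"
    by (intro integrable_mult_right integrable_mvn_density_moment[OF pd tot])
  show "AE z in lborel. norm (mvn_density S z * g z)
      \<le> norm (C * ((1 + z \<bullet> (matrix_inv S *v z))\<^sup>2 * mvn_density S z))"
    using mult_left_mono[OF bound mvn_density_nonneg[OF tot]] mvn_density_nonneg[OF tot] bound[of 0]
    by (intro AE_I2) (simp add: abs_mult mult_ac)
qed simp

lemma measurable_sigma_events:
  assumes "A \<subseteq> sets M" and "f \<in> measurable (sigma (space M) A) N"
  shows "f \<in> measurable M N"
proof (rule measurable_from_subalg[OF _ assms(2)])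
  show "subalgebra M (sigma (space M) A)"
    using assms(1) sets.sets_into_space unfolding subalgebra_def
    by (auto simp: space_measure_of_conv sets_measure_of_conv sets.sigma_sets_subset)
qed

lemma measurable_sigma_preimages:
  assumes "G \<subseteq> Pow \<Omega>" and "f \<in> \<Omega> \<rightarrow> space N"
    and "\<And>A. A \<in> sets N \<Longrightarrow> f -` A \<inter> \<Omega> \<in> G"
  shows "f \<in> measurable (sigma \<Omega> G) N"
  using assms by (intro measurableI) (auto simp: sigma_sets.Basic)

lemma (in prob_space) indep_var_sigma_sets:
  assumes ind: "indep_set (sigma_sets (space M) A) (sigma_sets (space M) B)"
    and A: "A \<subseteq> events" and B: "B \<subseteq> events"
    and X: "X \<in> measurable (sigma (space M) A) S" and Y: "Y \<in> measurable (sigma (space M) B) T"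
  shows "indep_var S X T Y"
proof -
  have "A \<subseteq> Pow (space M)" "B \<subseteq> Pow (space M)"
    using A B sets.sets_into_space by blast+
  then have "{X -` a \<inter> space M |a. a \<in> sets S} \<subseteq> sigma_sets (space M) A"
    and "{Y -` a \<inter> space M |a. a \<in> sets T} \<subseteq> sigma_sets (space M) B"
    using measurable_sets[OF X] measurable_sets[OF Y]
    by (simp_all add: sets_measure_of space_measure_of) blast+
  then have "sigma_sets (space M) {X -` a \<inter> space M |a. a \<in> sets S} \<subseteq> sigma_sets (space M) A"
    and "sigma_sets (space M) {Y -` a \<inter> space M |a. a \<in> sets T} \<subseteq> sigma_sets (space M) B"
    by (simp_all add: sigma_sets_mono)
  then have "indep_set (sigma_sets (space M) {X -` a \<inter> space M |a. a \<in> sets S})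
      (sigma_sets (space M) {Y -` a \<inter> space M |a. a \<in> sets T})"
    using ind unfolding indep_sets2_eq by blast
  then show ?thesis
    using measurable_sigma_events[OF A X] measurable_sigma_events[OF B Y]
    unfolding indep_var_eq by blast
qed

lemma (in prob_space) indep_vars_imp_indep_var:
  assumes ind: "indep_vars M' X I" and st: "s \<in> I" "t \<in> I" "s \<noteq> t"
  shows "indep_var (M' s) (X s) (M' t) (X t)"
proof -
  define F where "F i = sigma_sets (space M) {X i -` A \<inter> space M |A. A \<in> sets (M' i)}" for i
  have rv: "\<And>i. i \<in> I \<Longrightarrow> random_variable (M' i) (X i)" and indep: "indep_sets F I"
    using ind unfolding indep_vars_def F_def by auto
  have events: "F i \<subseteq> events" if "i \<in> I" for i
    using indep that unfolding indep_sets_def by auto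
  show ?thesis
    unfolding indep_var_eq indep_sets2_eq
  proof (intro conjI rv st ballI)
    show "sigma_sets (space M) {X s -` A \<inter> space M |A. A \<in> sets (M' s)} \<subseteq> events"
      "sigma_sets (space M) {X t -` A \<inter> space M |A. A \<in> sets (M' t)} \<subseteq> events"
      using events st by (simp_all add: F_def)
    fix a b assume a: "a \<in> sigma_sets (space M) {X s -` A \<inter> space M |A. A \<in> sets (M' s)}"
      and b: "b \<in> sigma_sets (space M) {X t -` A \<inter> space M |A. A \<in> sets (M' t)}"
    define G where "G j = (if j = s then a else b)" for j
    have "prob (\<Inter> (G ` {s, t})) = (\<Prod>j\<in>{s, t}. prob (G j))"
      by (rule indep_setsD[OF indep]) (use st a b in \<open>auto simp: G_def F_def\<close>)
    then show "prob (a \<inter> b) = prob a * prob b"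
      using st by (simp add: G_def Int_commute)
  qed
qed

lemma tendsto_le_imp_Liminf_ge:
  fixes u h :: "nat \<Rightarrow> real"
  assumes "u \<longlonglongrightarrow> l" and "\<And>T. u T \<le> h T"
  shows "ereal l \<le> Liminf sequentially (\<lambda>T. ereal (h T))"
proof -
  have "Liminf sequentially (\<lambda>T. ereal (u T)) = ereal l"
    using assms(1) by (intro lim_imp_Liminf) (simp_all add: tendsto_ereal)
  moreover have "Liminf sequentially (\<lambda>T. ereal (u T)) \<le> Liminf sequentially (\<lambda>T. ereal (h T))"
    using assms(2) by (intro Liminf_mono always_eventually) simp
  ultimately show ?thesis
    by simp
qed

lemma finite_phase_set: "finite (phase_set :: (real^('m::finite \<times> 3)) set)"
proof (rule finite_subset)
  show "phase_set \<subseteq> vec_lambda ` (UNIV \<rightarrow>\<^sub>E {0::real, 1})"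
    unfolding phase_set_def by (auto intro!: rev_image_eqI[of "vec_nth _"])
qed (intro finite_imageI finite_PiE; simp)

locale phase_identification =
  fixes P :: "'w measure"
    and K L :: "real^('m::finite \<times> 3)^('m \<times> 3)"
    and S :: "real^'m^'m"
    and Vr :: "nat \<Rightarrow> 'w \<Rightarrow> real^('m \<times> 3)"
    and Pp Qq N :: "nat \<Rightarrow> 'w \<Rightarrow> real^'m"
    and xstar :: "real^('m \<times> 3)"
  assumes prob_space: "prob_space P"
    and S_pd: "pos_def_mat S"
    and gauss: "\<And>t. t \<ge> 1 \<Longrightarrow> distributed P lborel (N t) (\<lambda>z. ennreal (mvn_density S z))"
    and inputs_rv: "\<And>t. t \<ge> 1 \<Longrightarrow> (\<lambda>\<omega>. (Vr t \<omega>, Pp t \<omega>, Qq t \<omega>)) \<in> borel_measurable P"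
    and noise_iid: "prob_space.indep_vars P (\<lambda>_. borel) N {1..}"
    and noise_indep_inputs:
      "prob_space.indep_set P
         (sigma_sets (space P) (\<Union>t\<in>{1..}. {N t -` A \<inter> space P | A. A \<in> sets borel}))
         (sigma_sets (space P) (\<Union>t\<in>{1..}.
            {(\<lambda>\<omega>. (Vr t \<omega>, Pp t \<omega>, Qq t \<omega>)) -` A \<inter> space P | A. A \<in> sets borel}))"
    and bounded_moment: "\<And>x. x \<in> phase_set \<Longrightarrow>
       (SUP t\<in>{1..}. \<integral>\<^sup>+ \<omega>. ennreal ((norm (model_volt K L (Vr t \<omega>) (Pp t \<omega>) (Qq t \<omega>) xstar
                                          - model_volt K L (Vr t \<omega>) (Pp t \<omega>) (Qq t \<omega>) x))\<^sup>2) \<partial>P) < \<infinity>"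
begin

sublocale prob_space P
  by (rule prob_space)

definition noise_form :: "real^'m \<Rightarrow> real" where
  "noise_form z = z \<bullet> (matrix_inv S *v z)"

definition inputs :: "nat \<Rightarrow> 'w \<Rightarrow> (real^('m \<times> 3)) \<times> (real^'m) \<times> (real^'m)" where
  "inputs t \<omega> = (Vr t \<omega>, Pp t \<omega>, Qq t \<omega>)"

definition noise_preimages :: "'w set set" where
  "noise_preimages = (\<Union>t\<in>{1..}. {N t -` A \<inter> space P | A. A \<in> sets (borel :: (real^'m) measure)})"

definition input_preimages :: "'w set set" where
  "input_preimages = (\<Union>t\<in>{1..}. {inputs t -` A \<inter> space P | A.
     A \<in> sets (borel :: ((real^('m \<times> 3)) \<times> (real^'m) \<times> (real^'m)) measure)})"

lemma noise_form_nonneg: "0 \<le> noise_form z"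
  unfolding noise_form_def by (rule pos_def_mat_inv_form_nonneg[OF S_pd])

lemma borel_measurable_noise_form [measurable]: "noise_form \<in> borel_measurable borel"
  unfolding noise_form_def[abs_def] by measurable

lemma noise_measurable: "t \<ge> 1 \<Longrightarrow> N t \<in> borel_measurable P"
  using distributed_measurable[OF gauss] by (simp add: measurable_lborel1)

lemma inputs_measurable: "t \<ge> 1 \<Longrightarrow> inputs t \<in> borel_measurable P"
  using inputs_rv by (simp add: inputs_def[abs_def])

lemma noise_preimages_events: "noise_preimages \<subseteq> events"
  unfolding noise_preimages_def using noise_measurable by (auto intro!: measurable_sets)

lemma input_preimages_events: "input_preimages \<subseteq> events"
  unfolding input_preimages_def using inputs_measurable by (auto intro!: measurable_sets)

lemma noise_measurable_preimages: "t \<ge> 1 \<Longrightarrow> N t \<in> borel_measurable (sigma (space P) noise_preimages)"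
  using noise_preimages_events sets.sets_into_space
  by (intro measurable_sigma_preimages) (auto simp: noise_preimages_def)

lemma inputs_measurable_preimages: "t \<ge> 1 \<Longrightarrow> inputs t \<in> borel_measurable (sigma (space P) input_preimages)"
  using input_preimages_events sets.sets_into_space
  by (intro measurable_sigma_preimages) (auto simp: input_preimages_def)

lemma indep_noise_inputs:
  fixes f g :: "'w \<Rightarrow> real"
  assumes "f \<in> borel_measurable (sigma (space P) noise_preimages)"
    and "g \<in> borel_measurable (sigma (space P) input_preimages)"
  shows "indep_var borel f borel g"
  using noise_indep_inputs noise_preimages_events input_preimages_events assms
  unfolding noise_preimages_def input_preimages_def inputs_def
  by (rule indep_var_sigma_sets)

lemma indep_noise_noise: "s \<ge> 1 \<Longrightarrow> t \<ge> 1 \<Longrightarrow> s \<noteq> t \<Longrightarrow> indep_var borel (N s) borel (N t)"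
  using indep_vars_imp_indep_var[OF noise_iid, of s t] by simp

lemma mvn_density_total_mass: "(\<integral>\<^sup>+z. ennreal (mvn_density S z) \<partial>lborel) = 1"
proof -
  have "emeasure (distr P lborel (N 1)) UNIV = 1"
    using noise_measurable[of 1] by (simp add: emeasure_distr measurable_lborel1 emeasure_space_1)
  then show ?thesis
    using distributed_distr_eq_density[OF gauss[of 1]] by (simp add: emeasure_density)
qed

lemma noise_expectation:
  fixes g :: "real^'m \<Rightarrow> real"
  assumes "t \<ge> 1" and [measurable]: "g \<in> borel_measurable borel"
    and "\<And>z. \<bar>g z\<bar> \<le> C * (1 + noise_form z)\<^sup>2"
  shows "integrable P (\<lambda>\<omega>. g (N t \<omega>))"
    and "(\<integral>\<omega>. g (N t \<omega>) \<partial>P) = (\<integral>z. mvn_density S z * g z \<partial>lborel)"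
proof -
  have "integrable lborel (\<lambda>z. mvn_density S z * g z)"
    using assms(3) by (intro integrable_mvn_density_mult[OF S_pd mvn_density_total_mass]) (simp_all add: noise_form_def)
  then show "integrable P (\<lambda>\<omega>. g (N t \<omega>))"
    using distributed_integrable[OF gauss[OF \<open>t \<ge> 1\<close>], of g] mvn_density_nonneg[OF mvn_density_total_mass]
    by simp
  show "(\<integral>\<omega>. g (N t \<omega>) \<partial>P) = (\<integral>z. mvn_density S z * g z \<partial>lborel)"
    using distributed_integral[OF gauss[OF \<open>t \<ge> 1\<close>], of g] mvn_density_nonneg[OF mvn_density_total_mass]
    by simp
qed

lemma norm_square_le_noise_form:
  obtains C where "\<And>z. (norm z)\<^sup>2 \<le> C * (1 + noise_form z)\<^sup>2"
proof -
  obtain \<mu> where "\<mu> > 0" and \<mu>: "\<And>z. \<mu> * (norm z)\<^sup>2 \<le> noise_form z"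
    using quadratic_form_coercive[of "matrix_inv S"] pos_def_mat_inv_form_pos[OF S_pd]
    unfolding noise_form_def by blast
  have "(norm z)\<^sup>2 \<le> (1 / \<mu>) * (1 + noise_form z)\<^sup>2" for z
  proof -
    have "noise_form z \<le> (1 + noise_form z)\<^sup>2"
      using noise_form_nonneg[of z] by (simp add: power2_eq_square algebra_simps)
    then show ?thesis
      using \<mu>[of z] \<open>\<mu> > 0\<close> by (simp add: field_simps)
  qed
  then show ?thesis
    using that by blast
qed

lemma noise_component:
  assumes "t \<ge> 1"
  shows "integrable P (\<lambda>\<omega>. N t \<omega> $ k)" and "(\<integral>\<omega>. N t \<omega> $ k \<partial>P) = 0"
proof -
  obtain C where C: "\<And>z. (norm z)\<^sup>2 \<le> C * (1 + noise_form z)\<^sup>2"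
    using norm_square_le_noise_form by blast
  have "\<bar>z $ k\<bar> \<le> (1 + C) * (1 + noise_form z)\<^sup>2" for z
  proof -
    have "a \<le> 1 + a\<^sup>2" if "0 \<le> a" for a :: real
      using that zero_le_power2[of "a - 1"] by (simp add: power2_eq_square algebra_simps)
    then have "\<bar>z $ k\<bar> \<le> 1 + (norm z)\<^sup>2"
      using component_le_norm_cart[of z k] norm_ge_zero[of z] by (meson order.trans)
    moreover have "1 \<le> (1 + noise_form z)\<^sup>2"
      using noise_form_nonneg[of z] by (simp add: power2_eq_square algebra_simps)
    ultimately show ?thesis
      using C[of z] by (simp add: algebra_simps)
  qed
  note moment = noise_expectation[OF assms, of "\<lambda>z. z $ k", OF _ this]
  then show "integrable P (\<lambda>\<omega>. N t \<omega> $ k)" and "(\<integral>\<omega>. N t \<omega> $ k \<partial>P) = 0"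
    by (simp_all add: integral_mvn_density_component)
qed

definition noise_mean :: real where
  "noise_mean = (\<integral>z. mvn_density S z * noise_form z \<partial>lborel)"

lemma noise_form_moments:
  assumes "t \<ge> 1"
  shows "integrable P (\<lambda>\<omega>. noise_form (N t \<omega>))"
    and "(\<integral>\<omega>. noise_form (N t \<omega>) \<partial>P) = noise_mean"
    and "integrable P (\<lambda>\<omega>. (noise_form (N t \<omega>) - noise_mean)\<^sup>2)"
    and "(\<integral>\<omega>. (noise_form (N t \<omega>) - noise_mean)\<^sup>2 \<partial>P)
           = (\<integral>z. mvn_density S z * (noise_form z - noise_mean)\<^sup>2 \<partial>lborel)"
proof -
  have one_le: "1 \<le> (1 + noise_form z)\<^sup>2" and form_le: "noise_form z \<le> (1 + noise_form z)\<^sup>2" for z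
    using noise_form_nonneg[of z] by (simp_all add: power2_eq_square algebra_simps)
  have "\<bar>noise_form z\<bar> \<le> 1 * (1 + noise_form z)\<^sup>2" for z
    using form_le[of z] noise_form_nonneg[of z] by simp
  note first = noise_expectation[OF assms borel_measurable_noise_form this]
  have "\<bar>(noise_form z - noise_mean)\<^sup>2\<bar> \<le> (2 + 2 * noise_mean\<^sup>2) * (1 + noise_form z)\<^sup>2" for z
  proof -
    have "(noise_form z - noise_mean)\<^sup>2 \<le> 2 * (noise_form z)\<^sup>2 + 2 * noise_mean\<^sup>2"
      using zero_le_power2[of "noise_form z + noise_mean"] by (simp add: power2_eq_square algebra_simps)
    moreover have "(noise_form z)\<^sup>2 \<le> (1 + noise_form z)\<^sup>2"
      using noise_form_nonneg[of z] by (intro power_mono) auto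
    moreover have "noise_mean\<^sup>2 \<le> noise_mean\<^sup>2 * (1 + noise_form z)\<^sup>2"
      using mult_left_mono[OF one_le[of z], of "noise_mean\<^sup>2"] by simp
    ultimately show ?thesis
      by (simp add: algebra_simps)
  qed
  note second = noise_expectation[OF assms _ this]
  show "integrable P (\<lambda>\<omega>. noise_form (N t \<omega>))" "(\<integral>\<omega>. noise_form (N t \<omega>) \<partial>P) = noise_mean"
    "integrable P (\<lambda>\<omega>. (noise_form (N t \<omega>) - noise_mean)\<^sup>2)"
    "(\<integral>\<omega>. (noise_form (N t \<omega>) - noise_mean)\<^sup>2 \<partial>P)
           = (\<integral>z. mvn_density S z * (noise_form z - noise_mean)\<^sup>2 \<partial>lborel)"
    using first second by (simp_all add: noise_mean_def)
qed

lemma cost_fun_xstar: "cost_fun K L S Vr Pp Qq N xstar T xstar \<omega> = (\<Sum>t=1..T. noise_form (N t \<omega>)) / real T"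
  by (simp add: cost_fun_def noise_form_def Let_def)

lemma cost_fun_xstar_tendsto: "AE \<omega> in P. (\<lambda>T. cost_fun K L S Vr Pp Qq N xstar T xstar \<omega>) \<longlonglongrightarrow> noise_mean"
proof -
  let ?W = "\<lambda>t \<omega>. noise_form (N t \<omega>) - noise_mean"
  have "AE \<omega> in P. (\<lambda>T. (\<Sum>t=1..T. ?W t \<omega>) / real T) \<longlonglongrightarrow> 0"
  proof (rule strong_law_orthogonal)
    show "?W t \<in> borel_measurable P" if "t \<ge> 1" for t
      using noise_measurable[OF that] by measurable
    show "integrable P (\<lambda>\<omega>. (?W t \<omega>)\<^sup>2)" if "t \<ge> 1" for t
      using noise_form_moments(3)[OF that] .
    show "(\<integral>\<omega>. (?W t \<omega>)\<^sup>2 \<partial>P) \<le> (\<integral>z. mvn_density S z * (noise_form z - noise_mean)\<^sup>2 \<partial>lborel)"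
      if "t \<ge> 1" for t
      using noise_form_moments(4)[OF that] by simp
    show "(\<integral>\<omega>. ?W s \<omega> * ?W t \<omega> \<partial>P) = 0" if "s \<ge> 1" "t \<ge> 1" "s \<noteq> t" for s t
    proof -
      have "indep_var borel (?W s) borel (?W t)"
        using indep_var_compose[OF indep_noise_noise[OF that], of "\<lambda>z. noise_form z - noise_mean" borel
            "\<lambda>z. noise_form z - noise_mean" borel]
        by (simp add: comp_def)
      then have "(\<integral>\<omega>. ?W s \<omega> * ?W t \<omega> \<partial>P) = (\<integral>\<omega>. ?W s \<omega> \<partial>P) * (\<integral>\<omega>. ?W t \<omega> \<partial>P)"
        using noise_form_moments(1)[OF that(1)] noise_form_moments(1)[OF that(2)]
        by (intro indep_var_lebesgue_integral) auto
      also have "\<dots> = 0"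
        using noise_form_moments(1,2)[OF that(1)] by (simp add: prob_space)
      finally show ?thesis .
    qed
  qed
  then show ?thesis
  proof eventually_elim
    case (elim \<omega>)
    have "(\<Sum>t=1..T. ?W t \<omega>) / real T + noise_mean = cost_fun K L S Vr Pp Qq N xstar T xstar \<omega>"
      if "T \<ge> 1" for T
      using that by (simp add: cost_fun_xstar sum_subtractf field_simps)
    then have "\<forall>\<^sub>F T in sequentially.
        (\<Sum>t=1..T. ?W t \<omega>) / real T + noise_mean = cost_fun K L S Vr Pp Qq N xstar T xstar \<omega>"
      by (rule eventually_mono[OF eventually_ge_at_top[of 1]])
    moreover have "(\<lambda>T. (\<Sum>t=1..T. ?W t \<omega>) / real T + noise_mean) \<longlonglongrightarrow> 0 + noise_mean"
      using elim by (intro tendsto_add tendsto_const)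
    ultimately show ?case
      using Lim_transform_eventually by fastforce
  qed
qed

definition volt_gap :: "real^('m \<times> 3) \<Rightarrow> (real^('m \<times> 3)) \<times> (real^'m) \<times> (real^'m) \<Rightarrow> real^'m" where
  "volt_gap x y = model_volt K L (fst y) (fst (snd y)) (snd (snd y)) xstar
                   - model_volt K L (fst y) (fst (snd y)) (snd (snd y)) x"

(* Sigma^-1 is not assumed symmetric, so the weight of the cross term uses it and its transpose. *)
definition gap_weight :: "real^('m \<times> 3) \<Rightarrow> (real^('m \<times> 3)) \<times> (real^'m) \<times> (real^'m) \<Rightarrow> real^'m" where
  "gap_weight x y = transpose (matrix_inv S) *v volt_gap x y + matrix_inv S *v volt_gap x y"

definition cross_term :: "real^('m \<times> 3) \<Rightarrow> nat \<Rightarrow> 'w \<Rightarrow> real" where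
  "cross_term x t \<omega> = gap_weight x (inputs t \<omega>) \<bullet> N t \<omega>"

lemma cost_summand_expand:
  "(let d = (model_volt K L (Vr t \<omega>) (Pp t \<omega>) (Qq t \<omega>) xstar + N t \<omega>)
              - model_volt K L (Vr t \<omega>) (Pp t \<omega>) (Qq t \<omega>) x
    in d \<bullet> (matrix_inv S *v d))
   = noise_form (N t \<omega>) + cross_term x t \<omega>
     + volt_gap x (inputs t \<omega>) \<bullet> (matrix_inv S *v volt_gap x (inputs t \<omega>))"
proof -
  define g where "g = volt_gap x (inputs t \<omega>)"
  define n where "n = N t \<omega>"
  have "(model_volt K L (Vr t \<omega>) (Pp t \<omega>) (Qq t \<omega>) xstar + N t \<omega>)
          - model_volt K L (Vr t \<omega>) (Pp t \<omega>) (Qq t \<omega>) x = g + n"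
    by (simp add: g_def n_def volt_gap_def inputs_def algebra_simps)
  then have "(let d = (model_volt K L (Vr t \<omega>) (Pp t \<omega>) (Qq t \<omega>) xstar + N t \<omega>)
              - model_volt K L (Vr t \<omega>) (Pp t \<omega>) (Qq t \<omega>) x
    in d \<bullet> (matrix_inv S *v d)) = (g + n) \<bullet> (matrix_inv S *v (g + n))"
    by (simp only: Let_def)
  also have "\<dots> = n \<bullet> (matrix_inv S *v n) + (g \<bullet> (matrix_inv S *v n) + n \<bullet> (matrix_inv S *v g))
      + g \<bullet> (matrix_inv S *v g)"
    by (simp add: matrix_vector_right_distrib inner_add_left inner_add_right)
  also have "g \<bullet> (matrix_inv S *v n) + n \<bullet> (matrix_inv S *v g) = cross_term x t \<omega>"
  proof -
    have "g \<bullet> (matrix_inv S *v n) = (transpose (matrix_inv S) *v g) \<bullet> n"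
      by (simp add: dot_lmul_matrix)
    moreover have "n \<bullet> (matrix_inv S *v g) = (matrix_inv S *v g) \<bullet> n"
      by (rule inner_commute)
    ultimately show ?thesis
      unfolding cross_term_def gap_weight_def g_def[symmetric] n_def[symmetric] inner_add_left
      by linarith
  qed
  finally show ?thesis
    by (simp add: g_def n_def noise_form_def)
qed

lemma cost_fun_lower:
  "cost_fun K L S Vr Pp Qq N xstar T xstar \<omega> + (\<Sum>t=1..T. cross_term x t \<omega>) / real T
     \<le> cost_fun K L S Vr Pp Qq N xstar T x \<omega>"
proof -
  have "volt_gap x (inputs t \<omega>) \<bullet> (matrix_inv S *v volt_gap x (inputs t \<omega>)) \<ge> 0" for t
    by (rule pos_def_mat_inv_form_nonneg[OF S_pd])
  then have "(\<Sum>t=1..T. noise_form (N t \<omega>) + cross_term x t \<omega>) / real T \<le> cost_fun K L S Vr Pp Qq N xstar T x \<omega>"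
    unfolding cost_fun_def cost_summand_expand
    by (simp add: divide_right_mono sum_mono)
  then show ?thesis
    by (simp add: cost_fun_xstar sum.distrib add_divide_distrib)
qed

lemma borel_measurable_volt_gap [measurable]: "volt_gap x \<in> borel_measurable borel"
  unfolding volt_gap_def[abs_def] model_volt_def
  by (intro borel_measurable_continuous_onI continuous_intros)

lemma borel_measurable_gap_weight [measurable]: "gap_weight x \<in> borel_measurable borel"
  unfolding gap_weight_def[abs_def] volt_gap_def model_volt_def
  by (intro borel_measurable_continuous_onI continuous_intros)

lemma gap_weight_measurable_preimages:
  "t \<ge> 1 \<Longrightarrow> (\<lambda>\<omega>. gap_weight x (inputs t \<omega>)) \<in> borel_measurable (sigma (space P) input_preimages)"
  using measurable_compose[OF inputs_measurable_preimages borel_measurable_gap_weight] by simp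

lemma gap_weight_measurable: "t \<ge> 1 \<Longrightarrow> (\<lambda>\<omega>. gap_weight x (inputs t \<omega>)) \<in> borel_measurable P"
  by (rule measurable_sigma_events[OF input_preimages_events gap_weight_measurable_preimages])

lemma volt_gap_moment:
  assumes "x \<in> phase_set"
  obtains C where "\<And>t. t \<ge> 1 \<Longrightarrow> integrable P (\<lambda>\<omega>. (norm (volt_gap x (inputs t \<omega>)))\<^sup>2)"
    and "\<And>t. t \<ge> 1 \<Longrightarrow> (\<integral>\<omega>. (norm (volt_gap x (inputs t \<omega>)))\<^sup>2 \<partial>P) \<le> C"
proof -
  define M where "M = (SUP t\<in>{1..}. \<integral>\<^sup>+ \<omega>. ennreal ((norm (volt_gap x (inputs t \<omega>)))\<^sup>2) \<partial>P)"
  have "M < \<infinity>"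
    using bounded_moment[OF assms] by (simp add: M_def volt_gap_def inputs_def)
  have "integrable P (\<lambda>\<omega>. (norm (volt_gap x (inputs t \<omega>)))\<^sup>2)
      \<and> (\<integral>\<omega>. (norm (volt_gap x (inputs t \<omega>)))\<^sup>2 \<partial>P) \<le> enn2real M" if "t \<ge> 1" for t
  proof -
    have [measurable]: "inputs t \<in> borel_measurable P"
      by (rule inputs_measurable[OF that])
    have le: "(\<integral>\<^sup>+\<omega>. ennreal ((norm (volt_gap x (inputs t \<omega>)))\<^sup>2) \<partial>P) \<le> M"
      unfolding M_def using that by (intro SUP_upper) auto
    then have "integrable P (\<lambda>\<omega>. (norm (volt_gap x (inputs t \<omega>)))\<^sup>2)"
      using \<open>M < \<infinity>\<close> by (intro integrableI_bounded) auto
    moreover have "(\<integral>\<omega>. (norm (volt_gap x (inputs t \<omega>)))\<^sup>2 \<partial>P) \<le> enn2real M"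
      using le \<open>M < \<infinity>\<close> by (subst integral_eq_nn_integral) (auto intro: enn2real_mono)
    ultimately show ?thesis ..
  qed
  then show ?thesis
    using that by blast
qed

lemma gap_weight_moment:
  assumes "x \<in> phase_set"
  obtains C where "\<And>t. t \<ge> 1 \<Longrightarrow> integrable P (\<lambda>\<omega>. (norm (gap_weight x (inputs t \<omega>)))\<^sup>2)"
    and "\<And>t. t \<ge> 1 \<Longrightarrow> (\<integral>\<omega>. (norm (gap_weight x (inputs t \<omega>)))\<^sup>2 \<partial>P) \<le> C"
proof -
  obtain C where C: "\<And>t. t \<ge> 1 \<Longrightarrow> integrable P (\<lambda>\<omega>. (norm (volt_gap x (inputs t \<omega>)))\<^sup>2)"
    "\<And>t. t \<ge> 1 \<Longrightarrow> (\<integral>\<omega>. (norm (volt_gap x (inputs t \<omega>)))\<^sup>2 \<partial>P) \<le> C"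
    using volt_gap_moment[OF assms] by blast
  have "bounded_linear (\<lambda>v. transpose (matrix_inv S) *v v + matrix_inv S *v v)"
    by (intro bounded_linear_add matrix_vector_mul_bounded_linear)
  then obtain B where B: "\<And>v. norm (transpose (matrix_inv S) *v v + matrix_inv S *v v) \<le> norm v * B"
    using bounded_linear.bounded by blast
  have weight_le: "(norm (gap_weight x y))\<^sup>2 \<le> B\<^sup>2 * (norm (volt_gap x y))\<^sup>2" for y
    using power_mono[OF B[of "volt_gap x y"] norm_ge_zero, of 2]
    by (simp add: gap_weight_def power_mult_distrib mult.commute)
  have "integrable P (\<lambda>\<omega>. (norm (gap_weight x (inputs t \<omega>)))\<^sup>2)
      \<and> (\<integral>\<omega>. (norm (gap_weight x (inputs t \<omega>)))\<^sup>2 \<partial>P) \<le> B\<^sup>2 * C" if "t \<ge> 1" for t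
  proof
    have [measurable]: "(\<lambda>\<omega>. gap_weight x (inputs t \<omega>)) \<in> borel_measurable P"
      by (rule gap_weight_measurable[OF that])
    have dom: "integrable P (\<lambda>\<omega>. B\<^sup>2 * (norm (volt_gap x (inputs t \<omega>)))\<^sup>2)"
      using C(1)[OF that] by simp
    show int: "integrable P (\<lambda>\<omega>. (norm (gap_weight x (inputs t \<omega>)))\<^sup>2)"
      by (rule Bochner_Integration.integrable_bound[OF dom]) (use weight_le in auto)
    have "(\<integral>\<omega>. (norm (gap_weight x (inputs t \<omega>)))\<^sup>2 \<partial>P)
        \<le> (\<integral>\<omega>. B\<^sup>2 * (norm (volt_gap x (inputs t \<omega>)))\<^sup>2 \<partial>P)"
      by (rule integral_mono[OF int dom weight_le])
    also have "\<dots> \<le> B\<^sup>2 * C"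
      using C(2)[OF that] by (simp add: mult_left_mono)
    finally show "(\<integral>\<omega>. (norm (gap_weight x (inputs t \<omega>)))\<^sup>2 \<partial>P) \<le> B\<^sup>2 * C" .
  qed
  then show ?thesis
    using that by blast
qed

lemma noise_norm_moment:
  assumes "t \<ge> 1"
  shows "integrable P (\<lambda>\<omega>. (norm (N t \<omega>))\<^sup>2)"
    and "(\<integral>\<omega>. (norm (N t \<omega>))\<^sup>2 \<partial>P) = (\<integral>z. mvn_density S z * (norm z)\<^sup>2 \<partial>lborel)"
proof -
  obtain C where "\<And>z. \<bar>(norm z)\<^sup>2\<bar> \<le> C * (1 + noise_form z)\<^sup>2"
    using norm_square_le_noise_form by (metis abs_power2 power2_abs abs_norm_cancel)
  note moment = noise_expectation[OF assms _ this]
  then show "integrable P (\<lambda>\<omega>. (norm (N t \<omega>))\<^sup>2)"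
    and "(\<integral>\<omega>. (norm (N t \<omega>))\<^sup>2 \<partial>P) = (\<integral>z. mvn_density S z * (norm z)\<^sup>2 \<partial>lborel)"
    by simp_all
qed

lemma cross_term_measurable: "t \<ge> 1 \<Longrightarrow> cross_term x t \<in> borel_measurable P"
  using gap_weight_measurable[of t x] noise_measurable[of t]
  unfolding cross_term_def[abs_def] by measurable

lemma cross_term_moment:
  assumes "x \<in> phase_set"
  obtains C where "\<And>t. t \<ge> 1 \<Longrightarrow> integrable P (\<lambda>\<omega>. (cross_term x t \<omega>)\<^sup>2)"
    and "\<And>t. t \<ge> 1 \<Longrightarrow> (\<integral>\<omega>. (cross_term x t \<omega>)\<^sup>2 \<partial>P) \<le> C"
proof -
  obtain C where C: "\<And>t. t \<ge> 1 \<Longrightarrow> integrable P (\<lambda>\<omega>. (norm (gap_weight x (inputs t \<omega>)))\<^sup>2)"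
    "\<And>t. t \<ge> 1 \<Longrightarrow> (\<integral>\<omega>. (norm (gap_weight x (inputs t \<omega>)))\<^sup>2 \<partial>P) \<le> C"
    using gap_weight_moment[OF assms] by blast
  define c where "c = (\<integral>z. mvn_density S z * (norm z)\<^sup>2 \<partial>lborel)"
  have "0 \<le> c"
    unfolding c_def using mvn_density_nonneg[OF mvn_density_total_mass]
    by (intro integral_nonneg_AE) simp
  have "integrable P (\<lambda>\<omega>. (cross_term x t \<omega>)\<^sup>2) \<and> (\<integral>\<omega>. (cross_term x t \<omega>)\<^sup>2 \<partial>P) \<le> c * C"
    if "t \<ge> 1" for t
  proof
    let ?n = "\<lambda>\<omega>. (norm (N t \<omega>))\<^sup>2" and ?w = "\<lambda>\<omega>. (norm (gap_weight x (inputs t \<omega>)))\<^sup>2"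
    have [measurable]: "N t \<in> borel_measurable (sigma (space P) noise_preimages)"
      "(\<lambda>\<omega>. gap_weight x (inputs t \<omega>)) \<in> borel_measurable (sigma (space P) input_preimages)"
      using noise_measurable_preimages[OF that] gap_weight_measurable_preimages[OF that] .
    have indep: "indep_var borel ?n borel ?w"
      by (intro indep_noise_inputs) measurable
    note prod_moment = indep_var_lebesgue_integral[OF indep noise_norm_moment(1)[OF that] C(1)[OF that]]
    have dom: "integrable P (\<lambda>\<omega>. ?n \<omega> * ?w \<omega>)"
      by (rule indep_var_integrable[OF indep noise_norm_moment(1)[OF that] C(1)[OF that]])
    have cauchy_schwarz: "(cross_term x t \<omega>)\<^sup>2 \<le> ?n \<omega> * ?w \<omega>" for \<omega>
      using power_mono[OF Cauchy_Schwarz_ineq2[of "gap_weight x (inputs t \<omega>)" "N t \<omega>"], of 2]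
      by (simp add: cross_term_def power_mult_distrib mult.commute)
    show int: "integrable P (\<lambda>\<omega>. (cross_term x t \<omega>)\<^sup>2)"
      by (rule Bochner_Integration.integrable_bound[OF dom])
         (use cross_term_measurable[OF that, of x] cauchy_schwarz in auto)
    have "(\<integral>\<omega>. (cross_term x t \<omega>)\<^sup>2 \<partial>P) \<le> (\<integral>\<omega>. ?n \<omega> * ?w \<omega> \<partial>P)"
      by (rule integral_mono[OF int dom cauchy_schwarz])
    also have "\<dots> = c * (\<integral>\<omega>. ?w \<omega> \<partial>P)"
      using prod_moment noise_norm_moment(2)[OF that] by (simp add: c_def)
    also have "\<dots> \<le> c * C"
      using C(2)[OF that] \<open>0 \<le> c\<close> by (rule mult_left_mono)
    finally show "(\<integral>\<omega>. (cross_term x t \<omega>)\<^sup>2 \<partial>P) \<le> c * C" .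
  qed
  then show ?thesis
    using that by blast
qed

lemma noise_component_product:
  assumes "s \<ge> 1" "t \<ge> 1" "s \<noteq> t"
  shows "integrable P (\<lambda>\<omega>. N s \<omega> $ k * N t \<omega> $ l)" and "(\<integral>\<omega>. N s \<omega> $ k * N t \<omega> $ l \<partial>P) = 0"
proof -
  have indep: "indep_var borel (\<lambda>\<omega>. N s \<omega> $ k) borel (\<lambda>\<omega>. N t \<omega> $ l)"
    using indep_var_compose[OF indep_noise_noise[OF assms], of "\<lambda>z. z $ k" borel "\<lambda>z. z $ l" borel]
    by (simp add: comp_def)
  note integrable = noise_component(1)[OF assms(1)] noise_component(1)[OF assms(2)]
  show "integrable P (\<lambda>\<omega>. N s \<omega> $ k * N t \<omega> $ l)"
    by (rule indep_var_integrable[OF indep integrable])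
  show "(\<integral>\<omega>. N s \<omega> $ k * N t \<omega> $ l \<partial>P) = 0"
    using indep_var_lebesgue_integral[OF indep integrable] noise_component(2)[OF assms(1)] by simp
qed

lemma gap_weight_component_measurable_preimages:
  "t \<ge> 1 \<Longrightarrow> (\<lambda>\<omega>. gap_weight x (inputs t \<omega>) $ j) \<in> borel_measurable (sigma (space P) input_preimages)"
  using measurable_compose[OF gap_weight_measurable_preimages borel_measurable_nth] by simp

lemma gap_weight_component_product:
  assumes "x \<in> phase_set" "s \<ge> 1" "t \<ge> 1"
  shows "integrable P (\<lambda>\<omega>. gap_weight x (inputs s \<omega>) $ k * gap_weight x (inputs t \<omega>) $ l)"
proof -
  obtain C where C: "\<And>t. t \<ge> 1 \<Longrightarrow> integrable P (\<lambda>\<omega>. (norm (gap_weight x (inputs t \<omega>)))\<^sup>2)"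
    using gap_weight_moment[OF assms(1)] by blast
  have measurable: "(\<lambda>\<omega>. gap_weight x (inputs r \<omega>) $ j) \<in> borel_measurable P" if "r \<ge> 1" for r j
    using input_preimages_events gap_weight_component_measurable_preimages[OF that]
    by (rule measurable_sigma_events)
  have "integrable P (\<lambda>\<omega>. (gap_weight x (inputs r \<omega>) $ j)\<^sup>2)" if "r \<ge> 1" for r j
  proof (rule Bochner_Integration.integrable_bound[OF C[OF that]])
    show "(\<lambda>\<omega>. (gap_weight x (inputs r \<omega>) $ j)\<^sup>2) \<in> borel_measurable P"
      by (rule borel_measurable_power[OF measurable[OF that]])
    have "(gap_weight x (inputs r \<omega>) $ j)\<^sup>2 \<le> (norm (gap_weight x (inputs r \<omega>)))\<^sup>2" for \<omega>
      using power_mono[OF component_le_norm_cart abs_ge_zero, of _ _ 2] by simp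
    then show "AE \<omega> in P. norm ((gap_weight x (inputs r \<omega>) $ j)\<^sup>2)
        \<le> norm ((norm (gap_weight x (inputs r \<omega>)))\<^sup>2)"
      by simp
  qed
  then show ?thesis
    using assms by (intro integrable_mult_square_integrable measurable)
qed

lemma cross_term_orthogonal:
  assumes "x \<in> phase_set" and st: "s \<ge> 1" "t \<ge> 1" "s \<noteq> t"
  shows "(\<integral>\<omega>. cross_term x s \<omega> * cross_term x t \<omega> \<partial>P) = 0"
proof -
  define noise_part where "noise_part k l \<omega> = N s \<omega> $ k * N t \<omega> $ l" for k l \<omega>
  define weight_part where
    "weight_part k l \<omega> = gap_weight x (inputs s \<omega>) $ k * gap_weight x (inputs t \<omega>) $ l" for k l \<omega>
  have noise_component_measurable:
    "(\<lambda>\<omega>. N r \<omega> $ j) \<in> borel_measurable (sigma (space P) noise_preimages)" if "r \<ge> 1" for r j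
    using measurable_compose[OF noise_measurable_preimages[OF that] borel_measurable_nth] by simp
  have indep: "indep_var borel (noise_part k l) borel (weight_part k l)" for k l
    unfolding noise_part_def[abs_def] weight_part_def[abs_def] using st
    by (intro indep_noise_inputs borel_measurable_times noise_component_measurable
        gap_weight_component_measurable_preimages)
  note integrable = noise_component_product(1)[OF st, folded noise_part_def]
    gap_weight_component_product[OF assms(1) st(1,2), folded weight_part_def]
  have "(\<integral>\<omega>. cross_term x s \<omega> * cross_term x t \<omega> \<partial>P)
      = (\<integral>\<omega>. (\<Sum>k\<in>UNIV. \<Sum>l\<in>UNIV. noise_part k l \<omega> * weight_part k l \<omega>) \<partial>P)"
    unfolding cross_term_def noise_part_def weight_part_def inner_vec_def sum_product
    by (rule Bochner_Integration.integral_cong) (simp_all add: mult_ac)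
  also have "\<dots> = (\<Sum>k\<in>UNIV. \<Sum>l\<in>UNIV. (\<integral>\<omega>. noise_part k l \<omega> \<partial>P) * (\<integral>\<omega>. weight_part k l \<omega> \<partial>P))"
    using indep_var_integrable[OF indep integrable] indep_var_lebesgue_integral[OF indep integrable]
    by (simp add: Bochner_Integration.integral_sum)
  also have "\<dots> = 0"
    using noise_component_product(2)[OF st] by (simp add: noise_part_def)
  finally show ?thesis .
qed

lemma cross_term_average:
  assumes "x \<in> phase_set"
  shows "AE \<omega> in P. (\<lambda>T. (\<Sum>t=1..T. cross_term x t \<omega>) / real T) \<longlonglongrightarrow> 0"
proof -
  obtain C where "\<And>t. t \<ge> 1 \<Longrightarrow> integrable P (\<lambda>\<omega>. (cross_term x t \<omega>)\<^sup>2)"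
    and "\<And>t. t \<ge> 1 \<Longrightarrow> (\<integral>\<omega>. (cross_term x t \<omega>)\<^sup>2 \<partial>P) \<le> C"
    using cross_term_moment[OF assms] by blast
  then show ?thesis
    by (intro strong_law_orthogonal[where C = C] cross_term_measurable cross_term_orthogonal[OF assms])
qed

end

theorem lemma1:
  fixes P :: "'w measure"
    and K L :: "real^('m::finite \<times> 3)^('m \<times> 3)"
    and S :: "real^'m^'m"
    and Vr :: "nat \<Rightarrow> 'w \<Rightarrow> real^('m \<times> 3)"
    and Pp Qq N :: "nat \<Rightarrow> 'w \<Rightarrow> real^'m"
    and xstar :: "real^('m \<times> 3)"
  assumes "prob_space P"
    and xstar: "xstar \<in> phase_set"
    and S_pd: "pos_def_mat S"
    and gauss: "\<And>t. t \<ge> 1 \<Longrightarrow> distributed P lborel (N t) (\<lambda>z. ennreal (mvn_density S z))"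
    and inputs_rv: "\<And>t. t \<ge> 1 \<Longrightarrow> (\<lambda>\<omega>. (Vr t \<omega>, Pp t \<omega>, Qq t \<omega>)) \<in> borel_measurable P"
    and noise_iid: "prob_space.indep_vars P (\<lambda>_. borel) N {1..}"
    and noise_indep_inputs:
      "prob_space.indep_set P
         (sigma_sets (space P) (\<Union>t\<in>{1..}. {N t -` A \<inter> space P | A. A \<in> sets borel}))
         (sigma_sets (space P) (\<Union>t\<in>{1..}.
            {(\<lambda>\<omega>. (Vr t \<omega>, Pp t \<omega>, Qq t \<omega>)) -` A \<inter> space P | A. A \<in> sets borel}))"
    and inputs_indep: "prob_space.indep_vars P (\<lambda>_. borel) (\<lambda>t \<omega>. (Vr t \<omega>, Pp t \<omega>, Qq t \<omega>)) {1..}"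
    and bounded_moment: "\<And>x. x \<in> phase_set \<Longrightarrow>
       (SUP t\<in>{1..}. \<integral>\<^sup>+ \<omega>. ennreal ((norm (model_volt K L (Vr t \<omega>) (Pp t \<omega>) (Qq t \<omega>) xstar
                                          - model_volt K L (Vr t \<omega>) (Pp t \<omega>) (Qq t \<omega>) x))\<^sup>2) \<partial>P) < \<infinity>"
  shows "AE \<omega> in P.
           convergent (\<lambda>T. cost_fun K L S Vr Pp Qq N xstar T xstar \<omega>) \<and>
           (\<forall>x\<in>phase_set.
              Liminf sequentially (\<lambda>T. ereal (cost_fun K L S Vr Pp Qq N xstar T x \<omega>))
                \<ge> ereal (lim (\<lambda>T. cost_fun K L S Vr Pp Qq N xstar T xstar \<omega>)))"
proof -
  interpret phase_identification P K L S Vr Pp Qq N xstar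
    using assms by (simp add: phase_identification_def)
  have "AE \<omega> in P. \<forall>x\<in>phase_set. (\<lambda>T. (\<Sum>t=1..T. cross_term x t \<omega>) / real T) \<longlonglongrightarrow> 0"
    by (rule AE_finite_allI[OF finite_phase_set]) (rule cross_term_average)
  with cost_fun_xstar_tendsto show ?thesis
  proof eventually_elim
    case (elim \<omega>)
    show ?case
    proof (intro conjI ballI)
      show "convergent (\<lambda>T. cost_fun K L S Vr Pp Qq N xstar T xstar \<omega>)"
        using elim(1) by (rule convergentI)
      fix x :: "real^('m \<times> 3)"
      assume "x \<in> phase_set"
      then have "(\<lambda>T. cost_fun K L S Vr Pp Qq N xstar T xstar \<omega> + (\<Sum>t=1..T. cross_term x t \<omega>) / real T)
          \<longlonglongrightarrow> noise_mean + 0"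
        using elim by (intro tendsto_add) auto
      then show "Liminf sequentially (\<lambda>T. ereal (cost_fun K L S Vr Pp Qq N xstar T x \<omega>))
          \<ge> ereal (lim (\<lambda>T. cost_fun K L S Vr Pp Qq N xstar T xstar \<omega>))"
        unfolding limI[OF elim(1)] by (intro tendsto_le_imp_Liminf_ge[OF _ cost_fun_lower]) simp
    qed
  qed
qed

end
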